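(* Let $R$ be a $*$-reducing ring, let $p,q\in R$ be projections, and put $\overline{p}=1-p$, $\overline{q}=1-q$. Suppose that at least one of the following elements is MP invertible: $1-pq$, $1-pqp$, $p-pqp$, $p-pq$, $p-qp$, $1-qp$, $1-qpq$, $q-qpq$, $q-qp$, $q-pq$, $p+q-pq$, $p+\overline{p}q\overline{p}$, $\overline{p}q\overline{p}$, $p+q-qp$, $q+\overline{q}p\overline{q}$, $\overline{q}p\overline{q}$, $p(1-q)$, $p-q$, $(1-p)q$. (Then all of them are MP invertible.) Then (1) $(1-pq)^{\dagger}p\overline{q}p = p\overline{q}(p\overline{q}p)^{\dagger} = p\overline{q}p(1-qp)^{\dagger} = p(p\overline{q})^{\dagger} = (\overline{q}p)^{\dagger}p = p(p-q)^{\dagger}p$; (2) $(p+\overline{p}q)^{\dagger}\overline{p}q\overline{p} = (q+p\overline{q})^{\dagger}\overline{p}q\overline{p} = \overline{p}q(\overline{p}q\overline{p})^{\dagger} = \overline{p}q\overline{p}(p+q\overline{p})^{\dagger} = \overline{p}q\overline{p}(q+\overline{q}p)^{\dagger} = \overline{p}(\overline{p}q)^{\dagger} = (q\overline{p})^{\dagger}\overline{p} = \overline{p}(q-p)^{\dagger}\overline{p}$.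
   Context: $R$ is an associative ring with identity $1$ and an involution $a\mapsto a^*$ (satisfying $(a^* )^*=a$, $(a+b)^*=a^*+b^*$, $(ab)^*=b^*a^*$). $R$ is $*$-reducing if $a^*a=0$ implies $a=0$ for all $a\in R$. An element $a$ is MP invertible if there is $b$ with $aba=a$, $bab=b$, $(ab)^*=ab$, $(ba)^*=ba$; this $b$ is unique and written $a^{\dagger}$. A projection is an element $p$ with $p^2=p=p^*$. *)

theory Defs
  imports Main
begin

definition involution :: "('a::ring_1 \<Rightarrow> 'a) \<Rightarrow> bool" where
  "involution st \<longleftrightarrow>
     (\<forall>a. st (st a) = a) \<and> (\<forall>a b. st (a + b) = st a + st b) \<and> (\<forall>a b. st (a * b) = st b * st a)"

definition star_reducing :: "('a::ring_1 \<Rightarrow> 'a) \<Rightarrow> bool" where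
  "star_reducing st \<longleftrightarrow> (\<forall>a. st a * a = 0 \<longrightarrow> a = 0)"

definition projection :: "('a::ring_1 \<Rightarrow> 'a) \<Rightarrow> 'a \<Rightarrow> bool" where
  "projection st p \<longleftrightarrow> p * p = p \<and> st p = p"

definition mp_inverse :: "('a::ring_1 \<Rightarrow> 'a) \<Rightarrow> 'a \<Rightarrow> 'a \<Rightarrow> bool" where
  "mp_inverse st a b \<longleftrightarrow>
     a * b * a = a \<and> b * a * b = b \<and> st (a * b) = a * b \<and> st (b * a) = b * a"

definition mp_invertible :: "('a::ring_1 \<Rightarrow> 'a) \<Rightarrow> 'a \<Rightarrow> bool" where
  "mp_invertible st a \<longleftrightarrow> (\<exists>b. mp_inverse st a b)"

text \<open>The (unique, when it exists) Moore-Penrose inverse.\<close>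
definition mp_dagger :: "('a::ring_1 \<Rightarrow> 'a) \<Rightarrow> 'a \<Rightarrow> 'a" where
  "mp_dagger st a = (THE b. mp_inverse st a b)"

end

theory Submission
  imports Defs
begin

text \<open>
  Let \<open>A = p(1-q)p\<close> and \<open>B = (1-p)q(1-p)\<close>. Each listed element is linked to the
  compression \<open>A\<close> of one of the pairs \<open>(p,q)\<close>, \<open>(q,p)\<close>, \<open>(1-p,1-q)\<close>, \<open>(1-q,1-p)\<close>
  by operations preserving MP invertibility: adjoints, \<open>a \<mapsto> a a\<^sup>*\<close> (this is where
  \<open>*\<close>-reducedness enters), multiplication by units \<open>1 \<plusminus> n\<close> with \<open>n\<^sup>2 = 0\<close>
  (e.g. \<open>1 - pq = (1 - pq(1-p))(1 - pqp)\<close>), and compression to, or orthogonal sums over,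
  the corners \<open>pRp\<close> and \<open>(1-p)R(1-p)\<close>. Hence \<open>A\<close> and \<open>B\<close> are MP invertible, and the
  MP inverses of the listed elements can be written through \<open>A\<^sup>\<dagger>\<close> and \<open>B\<^sup>\<dagger>\<close>,
  e.g. \<open>(p(1-q))\<^sup>\<dagger> = (1-q)pA\<^sup>\<dagger>\<close> and \<open>(p-q)\<^sup>\<dagger> = (p-q)(A\<^sup>\<dagger> + B\<^sup>\<dagger>)\<close>. With these,
  every expression in (1) collapses to the range projection \<open>AA\<^sup>\<dagger>\<close>, and (2) is (1)
  for the pair \<open>(1-p,1-q)\<close>.
\<close>

locale involutive_ring =
  fixes st :: "'a::ring_1 \<Rightarrow> 'a"
  assumes involution: "involution st"
begin

lemma star_star [simp]: "st (st a) = a"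
  and star_add [simp]: "st (a + b) = st a + st b"
  and star_mult [simp]: "st (a * b) = st b * st a"
  using involution unfolding involution_def by blast+

lemma star_one [simp]: "st 1 = 1"
  using star_mult[of "st 1" 1] by simp

lemma star_zero [simp]: "st 0 = 0"
  using star_add[of 0 0] by simp

lemma star_uminus [simp]: "st (- a) = - st a"
  using star_add[of "- a" a] by (simp add: eq_neg_iff_add_eq_0)

lemma star_diff [simp]: "st (a - b) = st a - st b"
  using star_add[of a "- b"] by simp

lemma projection_complement: "projection st p \<Longrightarrow> projection st (1 - p)"
  unfolding projection_def by (simp add: algebra_simps)

lemma mp_inverse_projection: "projection st e \<Longrightarrow> mp_inverse st e e"
  unfolding projection_def mp_inverse_def by simp

lemma mp_inverseD:
  assumes "mp_inverse st a b"
  shows "a * (b * a) = a" "a * (b * (a * x)) = a * x" "b * (a * b) = b" "b * (a * (b * x)) = b * x"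
    "st b * st a = a * b" "st b * (st a * x) = a * (b * x)"
    "st a * st b = b * a" "st a * (st b * x) = b * (a * x)"
  using assms unfolding mp_inverse_def by (metis mult.assoc star_mult)+

lemma mp_inverse_unique:
  assumes b: "mp_inverse st a b" and c: "mp_inverse st a c"
  shows "b = c"
proof -
  note B = mp_inverseD[OF b] and C = mp_inverseD[OF c]
  have "b = b * (st b * (st a * (st c * st a)))"
    using B C by (metis star_mult)
  also have "\<dots> = b * a * c"
    using B C by (simp add: mult.assoc)
  also have "\<dots> = st a * st b * (st a * st c) * c"
    using B C by (simp add: mult.assoc)
  also have "\<dots> = c"
    using B C by (metis star_mult mult.assoc)
  finally show ?thesis .
qed

lemma mp_dagger_eqI: "mp_inverse st a b \<Longrightarrow> mp_dagger st a = b"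
  unfolding mp_dagger_def by (rule the_equality) (auto intro: mp_inverse_unique)

lemma mp_inverse_mp_dagger: "mp_invertible st a \<Longrightarrow> mp_inverse st a (mp_dagger st a)"
  unfolding mp_invertible_def using mp_dagger_eqI by auto

lemma mp_invertibleI: "mp_inverse st a b \<Longrightarrow> mp_invertible st a"
  unfolding mp_invertible_def by blast

lemma mp_inverse_star: "mp_inverse st a b \<Longrightarrow> mp_inverse st (st a) (st b)"
  unfolding mp_inverse_def by (metis star_mult star_star mult.assoc)

lemma mp_invertible_star_iff: "mp_invertible st (st a) \<longleftrightarrow> mp_invertible st a"
  unfolding mp_invertible_def by (metis mp_inverse_star star_star)

lemma mp_dagger_star: "mp_invertible st a \<Longrightarrow> mp_dagger st (st a) = st (mp_dagger st a)"
  by (intro mp_dagger_eqI mp_inverse_star mp_inverse_mp_dagger)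

lemma mp_inverse_hermitian: "st a = a \<Longrightarrow> mp_inverse st a b \<Longrightarrow> st b = b"
  by (metis mp_inverse_star mp_inverse_unique)

lemma mp_inverse_hermitian_commute: "st a = a \<Longrightarrow> mp_inverse st a b \<Longrightarrow> a * b = b * a"
  by (metis mp_inverse_def mp_inverse_hermitian star_mult)

lemma mp_inverse_corner:
  assumes b: "mp_inverse st a b" and "st e = e" "e * a = a" "a * e = a"
  shows "e * b = b" "b * e = b"
proof -
  have "st a * e = st a" "e * st a = st a"
    using assms(2-4) by (metis star_mult)+
  then show "e * b = b" "b * e = b"
    using mp_inverseD[OF b] by (metis mult.assoc)+
qed

lemma mp_inverse_of_14_13_inverses:
  assumes "a * y * a = a" "st (y * a) = y * a" "a * z * a = a" "st (a * z) = a * z"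
  shows "mp_inverse st a (y * a * z)"
proof -
  have "a * (y * (a * x)) = a * x" "a * (z * (a * x)) = a * x" for x
    using assms by (metis mult.assoc)+
  then show ?thesis
    using assms unfolding mp_inverse_def by (simp add: mult.assoc)
qed

lemma mp_inverse_hermitian_of_14_inverse:
  assumes "st d = d" "d * y * d = d" "st (y * d) = y * d"
  shows "mp_inverse st d (y * d * st y)"
proof (rule mp_inverse_of_14_13_inverses)
  have "st (d * y * d) = st d"
    using assms(2) by simp
  then show "d * st y * d = d"
    using assms(1) by (simp add: mult.assoc)
qed (use assms in simp_all)

lemma mp_inverse_compression:
  assumes s: "st s = s" and x: "mp_inverse st s x"
    and e: "projection st e" and es: "e * s = s * e"
  shows "e * x = x * e" "mp_inverse st (s * e) (x * e)"
proof -
  note X = mp_inverseD[OF x]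
  have ee: "e * e = e" "st e = e" "e * (e * y) = e * y" for y
    using e unfolding projection_def by (simp_all add: mult.assoc[symmetric])
  have es': "e * (s * y) = s * (e * y)" for y
    using es by (metis mult.assoc)
  have xs: "s * x = x * s" and sx: "st x = x"
    using mp_inverse_hermitian_commute[OF s x] mp_inverse_hermitian[OF s x] by simp_all
  define r where "r = s * x"
  \<comment> \<open>\<open>r\<close> is the range projection of \<open>s\<close>, and \<open>r e r = e r\<close> is self-adjoint, so \<open>e r = r e\<close>\<close>
  have "r * e * r = e * r"
    unfolding r_def using X es' xs by (metis mult.assoc)
  then have er: "r * e = e * r"
    using ee(2) s sx xs unfolding r_def by (metis mult.assoc star_mult)
  have "x * e = x * r * e"
    unfolding r_def using X by (simp add: mult.assoc)
  also have "\<dots> = r * (e * x)"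
    using er es' xs unfolding r_def by (metis mult.assoc)
  also have "\<dots> = e * x"
    using er xs X unfolding r_def by (metis mult.assoc)
  finally show ex: "e * x = x * e" ..
  have "e * (x * y) = x * (e * y)" for y
    using ex by (metis mult.assoc)
  then show "mp_inverse st (s * e) (x * e)"
    unfolding mp_inverse_def using s sx ee es es' xs X by (simp add: mult.assoc)
qed

lemma mp_invertible_compression:
  assumes "st s = s" "mp_invertible st s" "projection st e" "e * s = s * e"
  shows "mp_invertible st (s * e)"
  using mp_inverse_compression(2)[OF assms(1) mp_inverse_mp_dagger[OF assms(2)] assms(3,4)]
  by (rule mp_invertibleI)

lemma mp_inverse_orthogonal_add:
  assumes x: "mp_inverse st a x" and y: "mp_inverse st b y" and e: "projection st e"
    and "e * a = a" "a * e = a" "e * b = 0" "b * e = 0"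
  shows "mp_inverse st (a + b) (x + y)"
proof -
  have e': "st e = e" "st (1 - e) = 1 - e"
    using e unfolding projection_def by simp_all
  have "(1 - e) * b = b" "b * (1 - e) = b"
    using assms(6,7) by (simp_all add: algebra_simps)
  then have "(1 - e) * y = y" "y * (1 - e) = y"
    using mp_inverse_corner[OF y e'(2)] by simp_all
  moreover have "e * (1 - e) = 0" "(1 - e) * e = 0"
    using e unfolding projection_def by (simp_all add: algebra_simps)
  ultimately have ey: "e * y = 0" "y * e = 0"
    by (metis mult.assoc mult_zero_left mult_zero_right)+
  have ex: "e * x = x" "x * e = x"
    using mp_inverse_corner[OF x e'(1) assms(4,5)] by simp_all
  have "a * (y * w) = 0" "b * (x * w) = 0" "x * (b * w) = 0" "y * (a * w) = 0"
    "a * y = 0" "b * x = 0" "x * b = 0" "y * a = 0" for w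
    using assms(4-7) ex ey by (metis mult.assoc mult_zero_left mult_zero_right)+
  then show ?thesis
    using x y unfolding mp_inverse_def by (simp add: algebra_simps)
qed

lemma mp_inverse_mult_star: "mp_inverse st a b \<Longrightarrow> mp_inverse st (a * st a) (st b * b)"
  unfolding mp_inverse_def by (metis star_mult star_star mult.assoc)

lemma mp_inverse_left_associates:
  assumes x: "mp_inverse st c x" and y: "mp_inverse st d y" and "c = g * d" "d = h * c"
  shows "x * c = y * d"
proof -
  have "c * (y * d) = c"
    unfolding assms(3) using mp_inverseD(1)[OF y] by (simp add: mult.assoc)
  moreover have "y * d * (x * c) = y * d"
    using assms(4) mp_inverseD(1,2)[OF x] by (simp add: mult.assoc)
  moreover have "st (y * d) = y * d" "st (x * c) = x * c"
    using x y unfolding mp_inverse_def by simp_all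
  ultimately show ?thesis
    by (metis mult.assoc star_mult)
qed

lemma mp_invertible_hermitian_left_associate:
  assumes "st d = d" and x: "mp_inverse st c x" and "c = g * d" "d = h * c" "g * h = 1"
  shows "mp_invertible st d"
proof -
  have gh: "g * (h * z) = z" for z
    using assms(5) by (simp add: mult.assoc[symmetric])
  have "d * (x * g) * d = d" "(x * g) * d = x * c"
    unfolding assms(4) using gh mp_inverseD(1,2)[OF x] by (simp_all add: mult.assoc)
  then show ?thesis
    using mp_inverse_hermitian_of_14_inverse[OF assms(1)] x mp_invertibleI
    unfolding mp_inverse_def by metis
qed

lemma mp_invertible_two_sided_associate:
  assumes y: "mp_inverse st d y" and "c = g * d" "h * g = 1" "c = d * k" "k * l = 1"
  shows "mp_invertible st c"
proof -
  have hg: "h * (g * z) = z" and kl: "k * (l * z) = z" for z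
    using assms(3,5) by (simp_all add: mult.assoc[symmetric])
  have "c * (y * h) * c = c" "(y * h) * c = y * d"
    unfolding assms(2) using hg mp_inverseD(1,2)[OF y] by (simp_all add: mult.assoc)
  moreover have "c * (l * y) * c = c" "c * (l * y) = d * y"
    unfolding assms(4) using kl mp_inverseD(1,2)[OF y] by (simp_all add: mult.assoc)
  ultimately show ?thesis
    using mp_inverse_of_14_13_inverses y mp_invertibleI unfolding mp_inverse_def by metis
qed

end

locale star_reducing_ring = involutive_ring +
  assumes star_reducing: "star_reducing st"
begin

lemma mp_inverse_mult_star_absorb:
  assumes v: "mp_inverse st (a * st a) v"
  shows "a * st a * v * a = a"
proof -
  define u where "u = a * st a"
  have "st u = u"
    unfolding u_def by simp
  then have uv: "st (u * v) = u * v" "u * v * u = u"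
    using v unfolding u_def mp_inverse_def by simp_all
  define z where "z = st a - st a * (u * v)"
  have sz: "st z = a - u * v * a"
    unfolding z_def using uv by (simp add: mult.assoc)
  have "st z * z = u - u * (u * v) - u * v * u + u * v * u * (u * v)"
    unfolding sz unfolding z_def u_def by (simp add: algebra_simps)
  also have "\<dots> = 0"
    using uv by (simp add: mult.assoc)
  finally have "z = 0"
    using star_reducing unfolding star_reducing_def by blast
  then show ?thesis
    using sz unfolding u_def by simp
qed

lemma mp_inverse_of_mult_star:
  assumes v: "mp_inverse st (a * st a) v"
  shows "mp_inverse st a (st a * v)"
proof -
  have sv: "st v = v"
    using mp_inverse_hermitian[OF _ v] by simp
  have "v * (a * st a) * v = v" "st (a * st a * v) = a * st a * v"
    using v unfolding mp_inverse_def by simp_all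
  then show ?thesis
    unfolding mp_inverse_def using mp_inverse_mult_star_absorb[OF v] sv
    by (simp add: mult.assoc)
qed

lemma mp_invertible_iff_mult_star: "mp_invertible st a \<longleftrightarrow> mp_invertible st (a * st a)"
  by (metis mp_invertible_def mp_inverse_mult_star mp_inverse_of_mult_star)

end

locale two_projections = star_reducing_ring +
  fixes p q :: "'a::ring_1"
  assumes projection_p: "projection st p" and projection_q: "projection st q"
begin

lemma p_idem [simp]: "p * p = p" and p_idem_assoc [simp]: "p * (p * x) = p * x"
  and q_idem [simp]: "q * q = q" and q_idem_assoc [simp]: "q * (q * x) = q * x"
  and star_p [simp]: "st p = p" and star_q [simp]: "st q = q"
  using projection_p projection_q unfolding projection_def by (simp_all add: mult.assoc[symmetric])

lemma two_projections_swap: "two_projections st q p"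
  by unfold_locales (fact involution star_reducing projection_q projection_p)+

lemma two_projections_complement: "two_projections st (1 - p) (1 - q)"
  using involution star_reducing projection_complement projection_p projection_q
  by unfold_locales blast+

lemma one_minus_pq_factorizations:
  "1 - p*q = (1 - p*q*(1-p)) * (1 - p*q*p)"
  "1 - p*q*p = (1 + p*q*(1-p)) * (1 - p*q)"
  "(1 - p*q*(1-p)) * (1 + p*q*(1-p)) = 1"
  "(1 + p*q*(1-p)) * (1 - p*q*(1-p)) = 1"
  by (simp_all add: algebra_simps)

lemma one_minus_pqp_eq: "1 - p*q*p = p*(1-q)*p + (1-p)"
  by (simp add: algebra_simps)

lemma compression_eqs:
  "(1 - p*q*p) * p = p*(1-q)*p" "p * (1 - p*q*p) = (1 - p*q*p) * p"
  "(1 - p*q) * p = p*(1-q)*p" "p*(1-q) * st (p*(1-q)) = p*(1-q)*p"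
  by (simp_all add: algebra_simps)

lemma mp_invertible_compression_of_one_minus_pqp:
  assumes "mp_invertible st (1 - p*q*p)"
  shows "mp_invertible st (p*(1-q)*p)"
  using mp_invertible_compression[OF _ assms projection_p] compression_eqs(1,2)
  by (simp add: mult.assoc)

lemma mp_inverse_one_minus_pqp:
  assumes v: "mp_inverse st (p*(1-q)*p) v"
  shows "mp_inverse st (1 - p*q*p) (v + (1 - p))"
  unfolding one_minus_pqp_eq
  using mp_inverse_orthogonal_add[OF v
      mp_inverse_projection[OF projection_complement[OF projection_p]] projection_p]
  by (simp add: algebra_simps)

lemma mp_invertible_one_minus_pqp_of_one_minus_pq:
  assumes "mp_invertible st (1 - p*q)"
  shows "mp_invertible st (1 - p*q*p)"
  by (rule mp_invertible_hermitian_left_associate[OF _ mp_inverse_mp_dagger[OF assms]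
        one_minus_pq_factorizations(1,2,3)]) (simp add: mult.assoc)

lemma mp_invertible_one_minus_pq_of_compression:
  assumes v: "mp_inverse st (p*(1-q)*p) v"
  shows "mp_invertible st (1 - p*q)"
proof -
  define n where "n = v * p*(1-q) * (1-p)"
  have "p * v = v" "v * p = v"
    using mp_inverse_corner[OF v] by (simp_all add: algebra_simps)
  then have pv: "(1 - p) * v = 0"
    by (simp add: algebra_simps)
  then have "n * n = 0"
    unfolding n_def by (metis mult.assoc mult_zero_left mult_zero_right)
  then have unit: "(1 + n) * (1 - n) = 1"
    by (simp add: algebra_simps)
  have "p*(1-q)*p * v * (p*(1-q)) = p*(1-q)"
    using mp_inverse_mult_star_absorb[of "p*(1-q)" v] v compression_eqs(4) by simp
  then have absorb: "p*(1-q)*p * v * (p*(1-q)) * x = p*(1-q) * x" for x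
    by simp
  have "(1 - p*q*p) * n = p*(1-q)*p * v * (p*(1-q)) * (1-p) + (1-p) * v * (p*(1-q)) * (1-p)"
    unfolding one_minus_pqp_eq n_def by (simp add: distrib_right mult.assoc)
  also have "\<dots> = p*(1-q)*(1-p)"
    unfolding absorb pv by simp
  finally have "(1 - p*q*p) * n = p*(1-q)*(1-p)" .
  then have "1 - p*q = (1 - p*q*p) * (1 + n)"
    by (simp add: algebra_simps)
  then show ?thesis
    using mp_invertible_two_sided_associate[OF mp_inverse_one_minus_pqp[OF v]
        one_minus_pq_factorizations(1,4) _ unit] by blast
qed

lemma mp_invertible_one_minus_pq_iff:
  "mp_invertible st (1 - p*q) \<longleftrightarrow> mp_invertible st (p*(1-q)*p)"
  using mp_invertible_one_minus_pqp_of_one_minus_pq mp_invertible_compression_of_one_minus_pqp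
    mp_invertible_one_minus_pq_of_compression mp_inverse_mp_dagger by blast

lemma mp_invertible_one_minus_qp_iff:
  "mp_invertible st (1 - q*p) \<longleftrightarrow> mp_invertible st (p*(1-q)*p)"
  using mp_invertible_star_iff[of "1 - p*q"] mp_invertible_one_minus_pq_iff by simp

lemma mp_invertible_compression_iff_left:
  "mp_invertible st (p*(1-q)) \<longleftrightarrow> mp_invertible st (p*(1-q)*p)"
  using mp_invertible_iff_mult_star[of "p*(1-q)"] compression_eqs(4) by simp

lemma mp_invertible_compression_iff_right:
  "mp_invertible st ((1-q)*p) \<longleftrightarrow> mp_invertible st (p*(1-q)*p)"
  using mp_invertible_star_iff[of "p*(1-q)"] mp_invertible_compression_iff_left by simp

lemma mp_invertible_compression_of_diff:
  assumes "mp_invertible st (p - q)"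
  shows "mp_invertible st (p*(1-q)*p)"
proof -
  have "mp_invertible st ((p - q) * (p - q))"
    using assms mp_invertible_iff_mult_star[of "p - q"] by simp
  moreover have "st ((p - q) * (p - q)) = (p - q) * (p - q)"
    "p * ((p - q) * (p - q)) = (p - q) * (p - q) * p" "(p - q) * (p - q) * p = p*(1-q)*p"
    by (simp_all add: algebra_simps)
  ultimately show ?thesis
    using mp_invertible_compression[OF _ _ projection_p] by metis
qed

lemma mp_invertible_compressionI:
  "mp_invertible st (1 - p*q) \<Longrightarrow> mp_invertible st (p*(1-q)*p)"
  "mp_invertible st (1 - q*p) \<Longrightarrow> mp_invertible st (p*(1-q)*p)"
  "mp_invertible st (1 - p*q*p) \<Longrightarrow> mp_invertible st (p*(1-q)*p)"
  "mp_invertible st (p - p*q*p) \<Longrightarrow> mp_invertible st (p*(1-q)*p)"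
  "mp_invertible st (p - p*q) \<Longrightarrow> mp_invertible st (p*(1-q)*p)"
  "mp_invertible st (p - q*p) \<Longrightarrow> mp_invertible st (p*(1-q)*p)"
  "mp_invertible st (p*(1-q)) \<Longrightarrow> mp_invertible st (p*(1-q)*p)"
  "mp_invertible st ((1-q)*p) \<Longrightarrow> mp_invertible st (p*(1-q)*p)"
  "mp_invertible st (p - q) \<Longrightarrow> mp_invertible st (p*(1-q)*p)"
  using mp_invertible_one_minus_pq_iff mp_invertible_one_minus_qp_iff
    mp_invertible_compression_of_one_minus_pqp mp_invertible_compression_iff_left
    mp_invertible_compression_iff_right mp_invertible_compression_of_diff
  by (simp_all add: right_diff_distrib left_diff_distrib)

lemma mp_invertible_compression_swap:
  "mp_invertible st (p*(1-q)*p) \<Longrightarrow> mp_invertible st (q*(1-p)*q)"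
  using mp_invertible_one_minus_qp_iff
    two_projections.mp_invertible_one_minus_pq_iff[OF two_projections_swap] by blast

lemma mp_invertible_compression_iff_qbar:
  "mp_invertible st ((1-q)*p*(1-q)) \<longleftrightarrow> mp_invertible st (p*(1-q)*p)"
proof -
  have "(1-q)*p * st ((1-q)*p) = (1-q)*p*(1-q)"
    by (simp add: mult.assoc)
  then show ?thesis
    using mp_invertible_iff_mult_star[of "(1-q)*p"] mp_invertible_compression_iff_right by simp
qed

lemma mp_invertible_compression_iff_pbar:
  "mp_invertible st (p*(1-q)*p) \<longleftrightarrow> mp_invertible st ((1-p)*q*(1-p))"
  using mp_invertible_compression_swap
    two_projections.mp_invertible_compression_swap[OF two_projections_swap]
    two_projections.mp_invertible_compression_iff_qbar[OF two_projections_swap]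
  by blast

lemma mp_invertible_compression_if_any:
  assumes "mp_invertible st (1 - p*q) \<or> mp_invertible st (1 - p*q*p) \<or>
         mp_invertible st (p - p*q*p) \<or> mp_invertible st (p - p*q) \<or>
         mp_invertible st (p - q*p) \<or> mp_invertible st (1 - q*p) \<or>
         mp_invertible st (1 - q*p*q) \<or> mp_invertible st (q - q*p*q) \<or>
         mp_invertible st (q - q*p) \<or> mp_invertible st (q - p*q) \<or>
         mp_invertible st (p + q - p*q) \<or> mp_invertible st (p + (1-p)*q*(1-p)) \<or>
         mp_invertible st ((1-p)*q*(1-p)) \<or> mp_invertible st (p + q - q*p) \<or>
         mp_invertible st (q + (1-q)*p*(1-q)) \<or> mp_invertible st ((1-q)*p*(1-q)) \<or>
         mp_invertible st (p*(1-q)) \<or> mp_invertible st (p - q) \<or>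
         mp_invertible st ((1-p)*q)"
  shows "mp_invertible st (p*(1-q)*p)"
proof -
  interpret qp: two_projections st q p
    by (rule two_projections_swap)
  interpret co: two_projections st "1 - p" "1 - q"
    rewrites "1 - (1 - p) = p" and "1 - (1 - q) = q"
    by (simp_all add: two_projections_complement)
  interpret co_qp: two_projections st "1 - q" "1 - p"
    rewrites "1 - (1 - p) = p" and "1 - (1 - q) = q"
    by (simp_all add: qp.two_projections_complement)
  have complement_forms:
    "p + q - p*q = 1 - (1-p)*(1-q)" "p + q - q*p = 1 - (1-q)*(1-p)"
    "p + (1-p)*q*(1-p) = 1 - (1-p)*(1-q)*(1-p)" "q + (1-q)*p*(1-q) = 1 - (1-q)*(1-p)*(1-q)"
    by (simp_all add: algebra_simps)
  have "mp_invertible st (p*(1-q)*p) \<or> mp_invertible st (q*(1-p)*q) \<or>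
      mp_invertible st ((1-p)*q*(1-p)) \<or> mp_invertible st ((1-q)*p*(1-q))"
    using assms unfolding complement_forms
    by (elim disjE) (blast intro: mp_invertible_compressionI qp.mp_invertible_compressionI
        co.mp_invertible_compressionI co_qp.mp_invertible_compressionI)+
  then show ?thesis
    using qp.mp_invertible_compression_swap mp_invertible_compression_iff_qbar
      mp_invertible_compression_iff_pbar by blast
qed

lemma mp_inverse_compression_corner:
  assumes "mp_inverse st (p*(1-q)*p) v"
  shows "p * v = v" "v * p = v" "st v = v" "p*(1-q)*p * v = v * (p*(1-q)*p)"
proof -
  have "st (p*(1-q)*p) = p*(1-q)*p"
    by (simp add: mult.assoc)
  then show "st v = v" "p*(1-q)*p * v = v * (p*(1-q)*p)"
    using mp_inverse_hermitian mp_inverse_hermitian_commute assms by blast+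
  show "p * v = v" "v * p = v"
    using mp_inverse_corner[OF assms] by (simp_all add: algebra_simps)
qed

lemma mp_dagger_left_factor:
  assumes "mp_invertible st (p*(1-q)*p)"
  shows "mp_dagger st (p*(1-q)) = (1-q)*p * mp_dagger st (p*(1-q)*p)"
  using mp_dagger_eqI[OF mp_inverse_of_mult_star[of "p*(1-q)"]] mp_inverse_mp_dagger[OF assms]
    compression_eqs(4) by (simp add: mult.assoc)

lemma mp_dagger_right_factor:
  assumes "mp_invertible st (p*(1-q)*p)"
  shows "mp_dagger st ((1-q)*p) = mp_dagger st (p*(1-q)*p) * p*(1-q)"
proof -
  have "mp_dagger st (st (p*(1-q))) = st (mp_dagger st (p*(1-q)))"
    using assms mp_invertible_compression_iff_left mp_dagger_star by blast
  then show ?thesis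
    using mp_dagger_left_factor[OF assms]
      mp_inverse_compression_corner(3)[OF mp_inverse_mp_dagger[OF assms]]
    by (simp add: mult.assoc)
qed

lemma mp_dagger_one_minus_pq_mult_compression:
  assumes v: "mp_inverse st (p*(1-q)*p) v"
  shows "mp_dagger st (1 - p*q) * (p*(1-q)*p) = v * (p*(1-q)*p)"
proof -
  have "mp_invertible st (1 - p*q)"
    by (rule mp_invertible_one_minus_pq_of_compression[OF v])
  then have "mp_dagger st (1 - p*q) * (1 - p*q) = (v + (1-p)) * (1 - p*q*p)"
    using mp_inverse_left_associates[OF mp_inverse_mp_dagger mp_inverse_one_minus_pqp[OF v]
        one_minus_pq_factorizations(1,2)] by blast
  then have "mp_dagger st (1 - p*q) * ((1 - p*q) * p) = (v + (1-p)) * ((1 - p*q*p) * p)"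
    by (metis mult.assoc)
  moreover have "(1-p) * (p*(1-q)*p) = 0"
    by (simp add: algebra_simps)
  ultimately show ?thesis
    unfolding compression_eqs(1,3) by (simp add: distrib_right)
qed

lemma mp_dagger_diff:
  assumes v: "mp_inverse st (p*(1-q)*p) v" and w: "mp_inverse st ((1-p)*q*(1-p)) w"
  shows "mp_dagger st (p - q) = (p - q) * (v + w)"
proof -
  have "mp_inverse st (p*(1-q)*p + (1-p)*q*(1-p)) (v + w)"
    by (rule mp_inverse_orthogonal_add[OF v w projection_p]) (simp_all add: algebra_simps)
  moreover have "(p - q) * st (p - q) = p*(1-q)*p + (1-p)*q*(1-p)"
    by (simp add: algebra_simps)
  ultimately show ?thesis
    using mp_dagger_eqI mp_inverse_of_mult_star by (metis star_diff star_p star_q)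
qed

lemma range_projection_eqs:
  assumes A: "mp_invertible st (p*(1-q)*p)" and B: "mp_invertible st ((1-p)*q*(1-p))"
  defines "P \<equiv> p*(1-q)*p * mp_dagger st (p*(1-q)*p)"
  shows "mp_dagger st (1 - p*q) * (p*(1-q)*p) = P"
    "p*(1-q) * mp_dagger st (p*(1-q)*p) = P"
    "p*(1-q)*p * mp_dagger st (1 - q*p) = P"
    "p * mp_dagger st (p*(1-q)) = P"
    "mp_dagger st ((1-q)*p) * p = P"
    "p * mp_dagger st (p - q) * p = P"
proof -
  define v where "v = mp_dagger st (p*(1-q)*p)"
  have v: "mp_inverse st (p*(1-q)*p) v"
    unfolding v_def using A by (rule mp_inverse_mp_dagger)
  note V = mp_inverse_compression_corner[OF v]
  have P: "P = p*(1-q)*p * v"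
    unfolding P_def v_def ..
  show one_minus_pq: "mp_dagger st (1 - p*q) * (p*(1-q)*p) = P"
    unfolding P V(4) by (rule mp_dagger_one_minus_pq_mult_compression[OF v])
  show "p*(1-q) * mp_dagger st (p*(1-q)*p) = P"
    unfolding P v_def[symmetric] using V(1) by (metis mult.assoc)
  have "mp_dagger st (1 - q*p) = st (mp_dagger st (1 - p*q))"
    using mp_dagger_star mp_invertible_one_minus_pq_of_compression[OF v] by fastforce
  then show "p*(1-q)*p * mp_dagger st (1 - q*p) = P"
    using arg_cong[OF one_minus_pq, of st] V(3,4) unfolding P by (simp add: mult.assoc)
  show "p * mp_dagger st (p*(1-q)) = P"
    unfolding mp_dagger_left_factor[OF A] P v_def by (simp add: mult.assoc)
  show "mp_dagger st ((1-q)*p) * p = P"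
    unfolding mp_dagger_right_factor[OF A] P v_def[symmetric] V(4) by (simp add: mult.assoc)
  define w where "w = mp_dagger st ((1-p)*q*(1-p))"
  have w: "mp_inverse st ((1-p)*q*(1-p)) w"
    unfolding w_def using B by (rule mp_inverse_mp_dagger)
  have "w * (1-p) = w"
    using mp_inverse_corner[OF w, of "1-p"] by (simp add: algebra_simps)
  then have "w * p = 0"
    by (simp add: algebra_simps)
  then have "p * mp_dagger st (p - q) * p = p * (p - q) * (v * p)"
    unfolding mp_dagger_diff[OF v w] by (simp add: algebra_simps)
  then show "p * mp_dagger st (p - q) * p = P"
    unfolding P using V(1,2) by (simp add: algebra_simps)
qed

end

theorem corollary2p9:
  fixes st :: "'a::ring_1 \<Rightarrow> 'a" and p q :: 'a
  assumes "involution st" and "star_reducing st"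
    and "projection st p" and "projection st q"
    and "mp_invertible st (1 - p*q) \<or> mp_invertible st (1 - p*q*p) \<or>
         mp_invertible st (p - p*q*p) \<or> mp_invertible st (p - p*q) \<or>
         mp_invertible st (p - q*p) \<or> mp_invertible st (1 - q*p) \<or>
         mp_invertible st (1 - q*p*q) \<or> mp_invertible st (q - q*p*q) \<or>
         mp_invertible st (q - q*p) \<or> mp_invertible st (q - p*q) \<or>
         mp_invertible st (p + q - p*q) \<or> mp_invertible st (p + (1-p)*q*(1-p)) \<or>
         mp_invertible st ((1-p)*q*(1-p)) \<or> mp_invertible st (p + q - q*p) \<or>
         mp_invertible st (q + (1-q)*p*(1-q)) \<or> mp_invertible st ((1-q)*p*(1-q)) \<or>
         mp_invertible st (p*(1-q)) \<or> mp_invertible st (p - q) \<or>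
         mp_invertible st ((1-p)*q)"
  shows "(mp_dagger st (1 - p*q) * (p*(1-q)*p) = p*(1-q) * mp_dagger st (p*(1-q)*p)
       \<and> p*(1-q) * mp_dagger st (p*(1-q)*p) = p*(1-q)*p * mp_dagger st (1 - q*p)
       \<and> p*(1-q)*p * mp_dagger st (1 - q*p) = p * mp_dagger st (p*(1-q))
       \<and> p * mp_dagger st (p*(1-q)) = mp_dagger st ((1-q)*p) * p
       \<and> mp_dagger st ((1-q)*p) * p = p * mp_dagger st (p - q) * p)
       \<and> (mp_dagger st (p + (1-p)*q) * ((1-p)*q*(1-p)) = mp_dagger st (q + p*(1-q)) * ((1-p)*q*(1-p))
       \<and> mp_dagger st (q + p*(1-q)) * ((1-p)*q*(1-p)) = (1-p)*q * mp_dagger st ((1-p)*q*(1-p))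
       \<and> (1-p)*q * mp_dagger st ((1-p)*q*(1-p)) = (1-p)*q*(1-p) * mp_dagger st (p + q*(1-p))
       \<and> (1-p)*q*(1-p) * mp_dagger st (p + q*(1-p)) = (1-p)*q*(1-p) * mp_dagger st (q + (1-q)*p)
       \<and> (1-p)*q*(1-p) * mp_dagger st (q + (1-q)*p) = (1-p) * mp_dagger st ((1-p)*q)
       \<and> (1-p) * mp_dagger st ((1-p)*q) = mp_dagger st (q*(1-p)) * (1-p)
       \<and> mp_dagger st (q*(1-p)) * (1-p) = (1-p) * mp_dagger st (q - p) * (1-p))"
proof -
  interpret two_projections st p q
    using assms(1-4) by unfold_locales
  interpret co: two_projections st "1 - p" "1 - q"
    rewrites "1 - (1 - p) = p" and "1 - (1 - q) = q"
    by (simp_all add: two_projections_complement)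
  have A: "mp_invertible st (p*(1-q)*p)"
    using assms(5) by (rule mp_invertible_compression_if_any)
  then have B: "mp_invertible st ((1-p)*q*(1-p))"
    using mp_invertible_compression_iff_pbar by blast
  have complement_forms:
    "p + (1-p)*q = 1 - (1-p)*(1-q)" "q + p*(1-q) = 1 - (1-p)*(1-q)"
    "p + q*(1-p) = 1 - (1-q)*(1-p)" "q + (1-q)*p = 1 - (1-q)*(1-p)" "q - p = (1-p) - (1-q)"
    by (simp_all add: algebra_simps)
  show ?thesis
    unfolding complement_forms
    by (simp only: range_projection_eqs[OF A B] co.range_projection_eqs[OF B A])
qed

end
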